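(* Work in the dense diffuse-noise model of the context under Assumptions (D1)–(D4). Let $(\hat\Phi,\hat{\mathfrak p})$ be any minimizer of the robust $K$-means objective $$\Gamma(\Phi,\mathfrak p)=\sum_{i\in\mathfrak p_1}\min_{\phi\in\Phi}\|\phi-\tilde X_i\|_2+\lambda\,|\mathfrak p_2|$$ over $\Phi\in\mathcal C_k$ and $\mathfrak p\in\mathcal P_2$. For each of the $k$ distinct signal positions $\nu^{1/2}\mathfrak z^j$, let $\mathcal B_j$ be the closed ball of radius $r=\min(\lambda/3,\eta/6)$ about $\nu^{1/2}\mathfrak z^j$. Then, with probability tending to one as $n\to\infty$, the following hold: (a) Each ball $\mathcal B_j$ contains exactly one point of $\hat\Phi$. (b) Every signal vertex $i\in\{1,\dots,n\}$ lies in $\hat{\mathfrak p}_1$. (c) Every signal vertex $i\le n$ is assigned to the center of $\hat\Phi$ lying in the ball about its own true position $\nu^{1/2}Y_i$. In particular, the signal vertices are partitioned by $(\hat\Phi,\hat{\mathfrak p})$ exactly according to their true blocks.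
   Context: $I_{p,q}$ denotes the $d\times d$ diagonal matrix with $p$ entries $+1$ followed by $q$ entries $-1$, where $p+q=d$. An indefinite orthogonal matrix is a matrix $\mathbf Q$ with $\mathbf Q^TI_{p,q}\mathbf Q=I_{p,q}$. Model. Let $\mathcal X_d\subset\mathbb{R}^d$ be a set such that $x^TI_{p,q}y\in[0,1]$ for all $x,y\in\mathcal X_d$, and let $\Omega\subset\mathcal X_d$ be convex. Let $\mathfrak z^1,\dots,\mathfrak z^k\in\mathcal X_d$ be distinct points, and let $\pi_1,\dots,\pi_k>0$ be fixed constants summing to $1$. Draw the signal rows $Y_1,\dots,Y_n$ i.i.d. from $\sum_j\pi_j\delta_{\mathfrak z^j}$. Draw the noise rows $Z_1,\dots,Z_m$ i.i.d. uniform on $\Omega$. Let $\mathbf X=[\mathbf Y^T|\mathbf Z^T]^T\in\mathbb{R}^{(n+m)\times d}$, with rows $X_1,\dots,X_{n+m}$. The graph $G_2$ on $n+m$ vertices has, conditional on $\mathbf X$, independent edges with $\mathbb P(u\sim v)=\nu X_u^TI_{p,q}X_v$, where $\nu\in(0,1]$ is a fixed constant (dense regime). Let $\hat{\mathbf X}=\mathrm{ASE}(\mathbf A,d)=\mathbf U\Sigma^{1/2}$ be the adjacency spectral embedding of the adjacency matrix $\mathbf A$ of $G_2$. Here $\Sigma$ holds the $d$ largest singular values of $\mathbf A$ and $\mathbf U$ the corresponding singular vectors. Notation: $\mathcal P_2$ is the set of ordered partitions $\mathfrak p=(\mathfrak p_1,\mathfrak p_2)$ of $[n+m]$ into two (possibly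 empty) parts. $\mathcal C_k$ is the collection of sets of $k$ distinct points of $\mathbb{R}^d$. A vertex $i\in\mathfrak p_1$ is assigned to the point of $\Phi$ nearest to $\tilde X_i$. Assumptions: (D1) There is a constant $\eta>0$ such that $\|\nu^{1/2}\mathfrak z^j-\nu^{1/2}\mathfrak z^l\|>\eta$ for all $j\ne l$. (D2) $m=o(n)$. (D3) The penalty $\lambda>0$ is bounded away from $0$. (D4) There exist indefinite orthogonal matrices $\mathbf Q_n$ and constants $c,C>0$ such that, with probability tending to one, $\max_{i\le n+m}\|\mathbf Q_n\hat X_i-\nu^{1/2}X_i\|\le C\log^c(n+m)/(n+m)^{1/2}$. We write $\tilde X_i:=\mathbf Q_n\hat X_i$ for the aligned embedded rows. *)

theory Defs
  imports "HOL-Probability.Probability"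
begin

text \<open>Coordinates of R^d are indexed by a finite linearly ordered type; the
  position (0-based) of an index in that order.\<close>
definition rank_idx :: "'d::{finite,linorder} \<Rightarrow> nat" where
  "rank_idx e = card {e'. e' < e}"

definition Ipq :: "nat \<Rightarrow> real^('d::{finite,linorder})^('d::{finite,linorder})" where
  "Ipq p = (\<chi> i j. if i = j then (if rank_idx i < p then 1 else -1) else 0)"

definition indef_orth :: "nat \<Rightarrow> real^('d::{finite,linorder})^('d::{finite,linorder}) \<Rightarrow> bool" where
  "indef_orth p Q \<longleftrightarrow> transpose Q ** Ipq p ** Q = Ipq p"

text \<open>Rows of X = [Y^T | Z^T]^T: first n rows from y, then rows from z.\<close>
definition stack :: "nat \<Rightarrow> (nat \<Rightarrow> 'a) \<Rightarrow> (nat \<Rightarrow> 'a) \<Rightarrow> nat \<Rightarrow> 'a" where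
  "stack n y z i = (if i < n then y i else z (i - n))"

text \<open>Xh is an adjacency spectral embedding ASE(A,d) = U Sigma^(1/2) of the
  N x N matrix A (indices 0..N-1): A = sum_k s_k u_k w_k^T is a singular value
  decomposition with singular values in decreasing order, and row i of Xh has
  coordinate number k (k = 0..d-1) equal to sqrt(s_k) * u_k(i).\<close>
definition is_ASE :: "nat \<Rightarrow> (nat \<Rightarrow> nat \<Rightarrow> real) \<Rightarrow> (nat \<Rightarrow> real^'d::{finite,linorder}) \<Rightarrow> bool" where
  "is_ASE N A Xh \<longleftrightarrow> (\<exists>u w s :: nat \<Rightarrow> _.
      (\<forall>k<N. \<forall>l<N. (\<Sum>i<N. u k i * u l i) = (if k = l then 1 else 0)
                  \<and> (\<Sum>i<N. w k i * w l i) = (if k = l then 1 else 0))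
    \<and> (\<forall>k<N. 0 \<le> s k)
    \<and> (\<forall>k l. k \<le> l \<and> l < N \<longrightarrow> s l \<le> s k)
    \<and> (\<forall>i<N. \<forall>j<N. A i j = (\<Sum>k<N. s k * u k i * w k j))
    \<and> (\<forall>i<N. \<forall>e. Xh i $ e =
          (if rank_idx e < N then sqrt (s (rank_idx e)) * u (rank_idx e) i else 0)))"

text \<open>Conditionally on the rows X, the edges {u,v} (u < v < N) are independent
  with P(A_uv = 1) = nu X_u^T I_{p,q} X_v; expressed through the joint law of
  (X, A) on rectangles.\<close>
definition edge_law :: "'w measure \<Rightarrow> nat \<Rightarrow> real \<Rightarrow> nat \<Rightarrow> ('w \<Rightarrow> nat \<Rightarrow> real^'d::{finite,linorder})
     \<Rightarrow> ('w \<Rightarrow> nat \<Rightarrow> nat \<Rightarrow> real) \<Rightarrow> bool" where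
  "edge_law M N nu p X A \<longleftrightarrow>
    (\<forall>(B :: nat \<Rightarrow> (real^('d::{finite,linorder})) set) (a :: nat \<Rightarrow> nat \<Rightarrow> bool). (\<forall>i. B i \<in> sets borel) \<longrightarrow>
      measure M {\<omega>\<in>space M. (\<forall>i<N. X \<omega> i \<in> B i)
                          \<and> (\<forall>u v. u < v \<and> v < N \<longrightarrow> (A \<omega> u v = 1 \<longleftrightarrow> a u v))}
      = (\<integral>\<omega>. indicator {\<omega>\<in>space M. \<forall>i<N. X \<omega> i \<in> B i} \<omega> *
             (\<Prod>(u,v)\<in>{(u,v). u < v \<and> v < N}.
                 if a u v then nu * (X \<omega> u \<bullet> (Ipq p *v X \<omega> v))
                 else 1 - nu * (X \<omega> u \<bullet> (Ipq p *v X \<omega> v))) \<partial>M))"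

definition rkm_obj :: "real \<Rightarrow> ('a::real_normed_vector) set \<Rightarrow> nat set \<Rightarrow> nat set \<Rightarrow> (nat \<Rightarrow> 'a) \<Rightarrow> real" where
  "rkm_obj lam Phi P1 P2 Xt =
     (\<Sum>i\<in>P1. Min ((\<lambda>\<phi>. norm (\<phi> - Xt i)) ` Phi)) + lam * real (card P2)"

definition rkm_adm :: "nat \<Rightarrow> nat \<Rightarrow> 'a set \<Rightarrow> nat set \<Rightarrow> nat set \<Rightarrow> bool" where
  "rkm_adm k N Phi P1 P2 \<longleftrightarrow> finite Phi \<and> card Phi = k \<and> P1 \<union> P2 = {..<N} \<and> P1 \<inter> P2 = {}"

definition rkm_minimizer :: "nat \<Rightarrow> real \<Rightarrow> nat \<Rightarrow> (nat \<Rightarrow> 'a::real_normed_vector) \<Rightarrow> 'a set \<Rightarrow> nat set \<Rightarrow> nat set \<Rightarrow> bool" where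
  "rkm_minimizer k lam N Xt Phi P1 P2 \<longleftrightarrow> rkm_adm k N Phi P1 P2 \<and>
     (\<forall>Phi' P1' P2'. rkm_adm k N Phi' P1' P2' \<longrightarrow> rkm_obj lam Phi P1 P2 Xt \<le> rkm_obj lam Phi' P1' P2' Xt)"

definition nearest :: "('a::real_normed_vector) set \<Rightarrow> 'a \<Rightarrow> 'a \<Rightarrow> bool" where
  "nearest Phi x \<phi> \<longleftrightarrow> \<phi> \<in> Phi \<and> (\<forall>\<psi>\<in>Phi. norm (\<phi> - x) \<le> norm (\<psi> - x))"

end

theory Submission
  imports Defs "HOL-Real_Asymp.Real_Asymp"
begin

text \<open>With probability tending to one three things hold simultaneously: every aligned
  embedding \<open>Q_n Xh_i\<close> is within \<open>\<epsilon>_n = C log\<^sup>c N / \<surd>N \<longrightarrow> 0\<close> (\<open>N = n + m\<close>) of its latent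
  position \<open>\<surd>\<nu> X_i\<close> (assumption D4); every block \<open>j\<close> contains at least \<open>n \<pi>_j / 2\<close> signal
  vertices (second-moment method); and all latent positions have norm at most some \<open>R\<close>,
  because \<open>Xd\<close> contains a ball (it contains the convex set \<open>Om\<close> of positive measure) and
  the form \<open>x\<^sup>T I_{p,q} y\<close> is bounded on \<open>Xd\<close>.
  On this event the argument is deterministic. Taking the true centres \<open>\<surd>\<nu> z_j\<close> and no
  outliers costs at most \<open>N \<epsilon>_n + 2 R m = o(n)\<close>. If some ball \<open>B_j\<close> of radius
  \<open>r = min (\<lambda>/3) (\<eta>/6)\<close> held no centre, each of the \<open>\<ge> n \<pi>_j / 2\<close> vertices of block \<open>j\<close>
  would cost at least \<open>r - \<epsilon>_n\<close> (as inlier, or \<open>\<lambda> \<ge> r\<close> as outlier), i.e. order \<open>n\<close> in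
  total. So each of the \<open>k\<close> disjoint balls holds a centre, and with only \<open>k\<close> centres exactly
  one. A signal vertex is then within \<open>r + \<epsilon>_n < \<lambda>\<close> of a centre, so declaring it an
  outlier is never optimal, and by the \<open>\<eta>\<close>-separation its nearest centre is the one in
  its own ball.\<close>

section \<open>The robust K-means objective\<close>

lemma rkm_obj_le_sum_bound:
  fixes Xt :: "nat \<Rightarrow> 'a::real_normed_vector"
  assumes "finite Phi" and close: "\<And>i. i < N \<Longrightarrow> \<exists>\<phi>\<in>Phi. norm (\<phi> - Xt i) \<le> b i"
  shows "rkm_obj lam Phi {..<N} {} Xt \<le> (\<Sum>i<N. b i)"
  unfolding rkm_obj_def
proof (simp, intro sum_mono)
  fix i assume "i \<in> {..<N}"
  then obtain \<phi> where "\<phi> \<in> Phi" "norm (\<phi> - Xt i) \<le> b i" using close by auto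
  then show "Min ((\<lambda>\<phi>. norm (\<phi> - Xt i)) ` Phi) \<le> b i"
    using \<open>finite Phi\<close> by (meson Min_le finite_imageI image_eqI order_trans)
qed

lemma rkm_obj_ge_card:
  fixes Xt :: "nat \<Rightarrow> 'a::real_normed_vector"
  assumes adm: "rkm_adm k N Phi P1 P2" and "Phi \<noteq> {}" and "S \<subseteq> {..<N}"
    and c: "0 \<le> c" "c \<le> lam" and far: "\<And>i \<phi>. i \<in> S \<Longrightarrow> \<phi> \<in> Phi \<Longrightarrow> c \<le> norm (\<phi> - Xt i)"
  shows "c * card S \<le> rkm_obj lam Phi P1 P2 Xt"
proof -
  define d where "d i = Min ((\<lambda>\<phi>. norm (\<phi> - Xt i)) ` Phi)" for i
  have fin: "finite Phi" "finite P1" "finite P2" "finite S"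
    using adm \<open>S \<subseteq> {..<N}\<close> unfolding rkm_adm_def by (auto intro: finite_subset)
  have d_ge: "c \<le> d i" if "i \<in> S" for i
    unfolding d_def using fin \<open>Phi \<noteq> {}\<close> far[OF that] by (subst Min_ge_iff) auto
  have "card S = card (P1 \<inter> S) + card (P2 \<inter> S)"
    using adm \<open>S \<subseteq> {..<N}\<close> fin unfolding rkm_adm_def
    by (subst card_Un_disjoint[symmetric]) (auto intro: arg_cong[where f = card])
  then have "c * card S = (\<Sum>i\<in>P1 \<inter> S. c) + c * card (P2 \<inter> S)"
    by (simp add: distrib_left)
  also have "\<dots> \<le> (\<Sum>i\<in>P1 \<inter> S. d i) + lam * card P2"
    using fin c d_ge by (intro add_mono sum_mono mult_mono) (auto intro: card_mono)
  also have "\<dots> \<le> (\<Sum>i\<in>P1. d i) + lam * card P2"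
    using fin \<open>Phi \<noteq> {}\<close> by (intro add_mono sum_mono2) (auto simp: d_def Min_ge_iff)
  finally show ?thesis unfolding rkm_obj_def d_def .
qed

lemma rkm_minimizer_outlier_far:
  fixes Xt :: "nat \<Rightarrow> 'a::real_normed_vector"
  assumes mini: "rkm_minimizer k lam N Xt Phi P1 P2" and "i \<in> P2" and "\<phi> \<in> Phi"
  shows "lam \<le> norm (\<phi> - Xt i)"
proof -
  have adm: "rkm_adm k N Phi P1 P2" using mini unfolding rkm_minimizer_def by auto
  then have fin: "finite Phi" "finite P1" "finite P2" and "i \<notin> P1"
    using \<open>i \<in> P2\<close> unfolding rkm_adm_def by (auto intro: finite_subset)
  have card_P2: "card P2 = Suc (card (P2 - {i}))"
    using fin(3) \<open>i \<in> P2\<close> by (rule card.remove)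
  have "rkm_adm k N Phi (insert i P1) (P2 - {i})"
    using adm \<open>i \<in> P2\<close> unfolding rkm_adm_def by auto
  then have "rkm_obj lam Phi P1 P2 Xt \<le> rkm_obj lam Phi (insert i P1) (P2 - {i}) Xt"
    using mini unfolding rkm_minimizer_def by blast
  also have "\<dots> = rkm_obj lam Phi P1 P2 Xt + Min ((\<lambda>\<phi>. norm (\<phi> - Xt i)) ` Phi) - lam"
    using fin \<open>i \<notin> P1\<close> by (simp add: rkm_obj_def card_P2 algebra_simps)
  finally have "lam \<le> Min ((\<lambda>\<phi>. norm (\<phi> - Xt i)) ` Phi)" by simp
  also have "\<dots> \<le> norm (\<phi> - Xt i)" using fin \<open>\<phi> \<in> Phi\<close> by simp
  finally show ?thesis .
qed

lemma disjoint_family_hitting_card_eq_1: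
  assumes "finite Phi" "card Phi = k" "disjoint_family_on S {..<k}"
    and hit: "\<And>j. j < k \<Longrightarrow> Phi \<inter> S j \<noteq> {}"
  shows "\<forall>j<k. card (Phi \<inter> S j) = 1" and "Phi \<subseteq> (\<Union>j<k. S j)"
proof -
  let ?U = "\<Union>j<k. Phi \<inter> S j"
  have card_U: "card ?U = (\<Sum>j<k. card (Phi \<inter> S j))"
    using assms(1,3) by (intro card_UN_disjoint) (auto simp: disjoint_family_on_def)
  have pos: "1 \<le> card (Phi \<inter> S j)" if "j < k" for j
    using hit[OF that] \<open>finite Phi\<close> by (simp add: Suc_le_eq card_gt_0_iff)
  have "card ?U \<le> k"
    using card_mono[OF \<open>finite Phi\<close>, of ?U] \<open>card Phi = k\<close> by auto
  moreover have "k \<le> card ?U"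
    using sum_mono[of "{..<k}" "\<lambda>_. 1" "\<lambda>j. card (Phi \<inter> S j)"] pos card_U by simp
  ultimately have sums_eq: "(\<Sum>j<k. 1) = (\<Sum>j<k. card (Phi \<inter> S j))" and "card ?U = card Phi"
    using card_U \<open>card Phi = k\<close> by auto
  show "\<forall>j<k. card (Phi \<inter> S j) = 1"
    using sum_mono_inv[OF sums_eq] pos by (metis finite_lessThan lessThan_iff)
  have "?U = Phi"
    using card_subset_eq[OF \<open>finite Phi\<close> _ \<open>card ?U = card Phi\<close>] by blast
  then show "Phi \<subseteq> (\<Union>j<k. S j)" by blast
qed

lemma disjoint_family_cball_separated:
  fixes w :: "nat \<Rightarrow> 'a::real_normed_vector"
  assumes sep: "\<And>j l. j < k \<Longrightarrow> l < k \<Longrightarrow> j \<noteq> l \<Longrightarrow> eta < norm (w j - w l)"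
    and "2 * r \<le> eta"
  shows "disjoint_family_on (\<lambda>j. cball (w j) r) {..<k}"
  unfolding disjoint_family_on_def
proof (intro ballI impI equals0I)
  fix j l x assume "j \<in> {..<k}" "l \<in> {..<k}" "j \<noteq> l" "x \<in> cball (w j) r \<inter> cball (w l) r"
  then have "norm (w j - w l) \<le> 2 * r" "eta < norm (w j - w l)"
    using dist_triangle2[of "w j" "w l" x] sep by (auto simp: dist_norm)
  then show False using \<open>2 * r \<le> eta\<close> by simp
qed

lemma nearest_iff_own_cball:
  fixes w :: "nat \<Rightarrow> 'a::real_normed_vector"
  assumes cover: "Phi \<subseteq> (\<Union>l<k. cball (w l) r)" and one: "card (Phi \<inter> cball (w j) r) = 1"
    and sep: "\<And>l. l < k \<Longrightarrow> l \<noteq> j \<Longrightarrow> eta < norm (w l - w j)"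
    and close: "norm (x - w j) \<le> \<epsilon>" and "2 * (r + \<epsilon>) \<le> eta"
  shows "nearest Phi x \<phi> \<longleftrightarrow> \<phi> \<in> Phi \<inter> cball (w j) r"
proof -
  obtain \<phi>j where ball_j: "Phi \<inter> cball (w j) r = {\<phi>j}"
    using one by (rule card_1_singletonE)
  then have "\<phi>j \<in> Phi" "norm (\<phi>j - w j) \<le> r" by (auto simp: dist_norm norm_minus_commute)
  then have near: "norm (\<phi>j - x) \<le> r + \<epsilon>"
    using close by (intro norm_diff_triangle_le) (auto simp: norm_minus_commute)
  have far: "r + \<epsilon> < norm (\<psi> - x)" if "\<psi> \<in> Phi" "\<psi> \<noteq> \<phi>j" for \<psi>
  proof -
    obtain l where l: "l < k" "\<psi> \<in> cball (w l) r" using cover \<open>\<psi> \<in> Phi\<close> by blast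
    have "l \<noteq> j" using l(2) ball_j that by blast
    have "eta < norm (w l - w j)" using sep l(1) \<open>l \<noteq> j\<close> .
    moreover have "norm (w l - w j) \<le> norm (w l - \<psi>) + norm (\<psi> - x) + norm (x - w j)"
      by (intro norm_diff_triangle_le[where y = x] norm_diff_triangle_le[where y = \<psi>] order_refl)
    moreover have "norm (w l - \<psi>) \<le> r" using l(2) by (simp add: dist_norm)
    ultimately show ?thesis using close \<open>2 * (r + \<epsilon>) \<le> eta\<close> by argo
  qed
  have "nearest Phi x \<phi> \<longleftrightarrow> \<phi> = \<phi>j"
  proof
    assume "nearest Phi x \<phi>"
    then have "\<phi> \<in> Phi" "norm (\<phi> - x) \<le> norm (\<phi>j - x)"
      using \<open>\<phi>j \<in> Phi\<close> unfolding nearest_def by auto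
    with near far show "\<phi> = \<phi>j" by fastforce
  next
    assume "\<phi> = \<phi>j"
    have "norm (\<phi>j - x) \<le> norm (\<psi> - x)" if "\<psi> \<in> Phi" for \<psi>
      using near far[OF that] by (cases "\<psi> = \<phi>j") auto
    with \<open>\<phi> = \<phi>j\<close> \<open>\<phi>j \<in> Phi\<close> show "nearest Phi x \<phi>" unfolding nearest_def by blast
  qed
  then show ?thesis using ball_j by blast
qed

section \<open>Deterministic recovery of the blocks\<close>

text \<open>The signal vertices are \<open>0..<n\<close>, the noise vertices \<open>n..<N\<close>; \<open>W i\<close> is the latent
  position of vertex \<open>i\<close>, \<open>Xt i\<close> its embedding, \<open>w j\<close> the position of block \<open>j\<close>, and \<open>b\<close>
  a lower bound on the block sizes.\<close>
locale rkm_recovery =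
  fixes k n N :: nat and lam eta \<epsilon> B b :: real
    and w W Xt :: "nat \<Rightarrow> 'a::real_normed_vector" and Phi :: "'a set" and P1 P2 :: "nat set"
  assumes w_inj: "inj_on w {..<k}"
    and w_sep: "\<And>j l. j < k \<Longrightarrow> l < k \<Longrightarrow> j \<noteq> l \<Longrightarrow> eta < norm (w j - w l)"
    and lam_pos: "0 < lam" and eta_pos: "0 < eta"
    and n_pos: "0 < n" and n_le_N: "n \<le> N"
    and signal: "\<And>i. i < n \<Longrightarrow> \<exists>j<k. W i = w j"
    and block_size: "\<And>j. j < k \<Longrightarrow> b \<le> card {i. i < n \<and> W i = w j}"
    and Xt_close: "\<And>i. i < N \<Longrightarrow> norm (Xt i - W i) \<le> \<epsilon>"
    and w_bounded: "\<And>j. j < k \<Longrightarrow> norm (w j) \<le> B"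
    and noise_bounded: "\<And>i. n \<le> i \<Longrightarrow> i < N \<Longrightarrow> norm (W i) \<le> B"
    and eps_small: "\<epsilon> \<le> min (lam / 3) (eta / 6) / 4"
    and cost_small: "real N * \<epsilon> + 2 * B * real (N - n) < b * min (lam / 3) (eta / 6) / 2"
    and minimizer: "rkm_minimizer k lam N Xt Phi P1 P2"
begin

definition r :: real where "r = min (lam / 3) (eta / 6)"

lemma r_pos: "0 < r" and r_le: "3 * r \<le> lam" "6 * r \<le> eta" and eps_le: "\<epsilon> \<le> r / 4"
  using lam_pos eta_pos eps_small by (auto simp: r_def)

lemma signal_close: "i < n \<Longrightarrow> norm (Xt i - W i) \<le> \<epsilon>"
  using Xt_close n_le_N by simp

lemma eps_nonneg: "0 \<le> \<epsilon>"
  using signal_close[OF n_pos] by (rule order_trans[OF norm_ge_zero])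

lemma k_pos: "0 < k"
  using signal[OF n_pos] by auto

lemma B_nonneg: "0 \<le> B"
  using w_bounded[OF k_pos] by (rule order_trans[OF norm_ge_zero])

lemma b_pos: "0 < b"
proof -
  have "0 \<le> real N * \<epsilon> + 2 * B * real (N - n)" using eps_nonneg B_nonneg by simp
  then have "0 < b * r" using cost_small by (simp add: r_def)
  then show ?thesis using r_pos by (rule zero_less_mult_pos2)
qed

lemma adm: "rkm_adm k N Phi P1 P2"
  using minimizer by (simp add: rkm_minimizer_def)

lemma Phi_ne: "Phi \<noteq> {}"
  using adm k_pos by (auto simp: rkm_adm_def)

lemma obj_lt: "rkm_obj lam Phi P1 P2 Xt < b * r / 2"
proof -
  define bound where "bound i = \<epsilon> + (if n \<le> i then 2 * B else 0)" for i
  have noise_indices: "{..<N} \<inter> {i. n \<le> i} = {n..<N}" by auto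
  have "rkm_adm k N (w ` {..<k}) {..<N} {}"
    using w_inj by (auto simp: rkm_adm_def card_image)
  then have "rkm_obj lam Phi P1 P2 Xt \<le> rkm_obj lam (w ` {..<k}) {..<N} {} Xt"
    using minimizer by (simp add: rkm_minimizer_def)
  also have "\<dots> \<le> (\<Sum>i<N. bound i)"
  proof (rule rkm_obj_le_sum_bound)
    fix i assume "i < N"
    show "\<exists>\<phi>\<in>w ` {..<k}. norm (\<phi> - Xt i) \<le> bound i"
    proof (cases "n \<le> i")
      case True
      have "norm (w 0 - Xt i) \<le> norm (w 0) + norm (W i) + norm (Xt i - W i)"
        by (intro norm_diff_triangle_le[where y = "W i"] norm_triangle_ineq4)
          (simp add: norm_minus_commute)
      also have "\<dots> \<le> B + B + \<epsilon>"
        using w_bounded[OF k_pos] noise_bounded[OF True \<open>i < N\<close>] Xt_close[OF \<open>i < N\<close>] by simp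
      finally show ?thesis
        using k_pos True by (intro bexI[of _ "w 0"]) (auto simp: bound_def add.commute)
    next
      case False
      then obtain j where "j < k" "W i = w j" using signal[of i] by auto
      then show ?thesis
        using Xt_close[OF \<open>i < N\<close>] False by (auto simp: bound_def norm_minus_commute)
    qed
  qed simp
  also have "(\<Sum>i<N. bound i) = real N * \<epsilon> + 2 * B * real (N - n)"
    using noise_indices by (simp add: bound_def sum.distrib sum.If_cases)
  also have "\<dots> < b * r / 2"
    using cost_small by (simp add: r_def)
  finally show ?thesis .
qed

lemma block_far_from_Phi:
  assumes "i < n" "W i = w j" "\<phi> \<in> Phi" "Phi \<inter> cball (w j) r = {}"
  shows "r - \<epsilon> \<le> norm (\<phi> - Xt i)"
proof -
  have "r < norm (\<phi> - w j)" using assms(3,4) by (auto simp: dist_norm norm_minus_commute)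
  moreover have "norm (\<phi> - w j) \<le> norm (\<phi> - Xt i) + norm (Xt i - W i)"
    using assms(2) by (intro norm_diff_triangle_le[where y = "Xt i"] order_refl) simp
  ultimately show ?thesis using signal_close[OF assms(1)] by linarith
qed

lemma ball_hit: "j < k \<Longrightarrow> Phi \<inter> cball (w j) r \<noteq> {}"
proof
  assume "j < k" and empty: "Phi \<inter> cball (w j) r = {}"
  let ?S = "{i. i < n \<and> W i = w j}"
  have "b * r / 2 = r / 2 * b" by simp
  also have "\<dots> \<le> (r - \<epsilon>) * b"
    using r_pos eps_le b_pos by (intro mult_right_mono) auto
  also have "\<dots> \<le> (r - \<epsilon>) * card ?S"
    using block_size[OF \<open>j < k\<close>] r_pos eps_le by (intro mult_left_mono) auto
  also have "\<dots> \<le> rkm_obj lam Phi P1 P2 Xt"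
    using adm Phi_ne n_le_N r_pos eps_nonneg eps_le r_le block_far_from_Phi[OF _ _ _ empty]
    by (intro rkm_obj_ge_card) auto
  also have "\<dots> < b * r / 2" by (rule obj_lt)
  finally show False by simp
qed

lemma balls_disjoint: "disjoint_family_on (\<lambda>j. cball (w j) r) {..<k}"
  using w_sep r_le r_pos by (intro disjoint_family_cball_separated) auto

lemma card_ball_eq_1: "j < k \<Longrightarrow> card (Phi \<inter> cball (w j) r) = 1"
  and Phi_subset_balls: "Phi \<subseteq> (\<Union>j<k. cball (w j) r)"
  using disjoint_family_hitting_card_eq_1[OF _ _ balls_disjoint ball_hit] adm
  by (auto simp: rkm_adm_def)

lemma nearest_iff:
  assumes "i < n"
  shows "nearest Phi (Xt i) \<phi> \<longleftrightarrow> \<phi> \<in> Phi \<inter> cball (W i) r"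
proof -
  obtain j where "j < k" "W i = w j" using signal[OF assms] by blast
  moreover have "nearest Phi (Xt i) \<phi> \<longleftrightarrow> \<phi> \<in> Phi \<inter> cball (w j) r"
  proof (rule nearest_iff_own_cball[OF Phi_subset_balls card_ball_eq_1[OF \<open>j < k\<close>]])
    show "eta < norm (w l - w j)" if "l < k" "l \<noteq> j" for l using w_sep that \<open>j < k\<close> by blast
    show "norm (Xt i - w j) \<le> \<epsilon>" using signal_close[OF assms] \<open>W i = w j\<close> by simp
    show "2 * (r + \<epsilon>) \<le> eta" using r_le eps_le r_pos by argo
  qed
  ultimately show ?thesis by simp
qed

lemma nearest_close:
  assumes "i < n"
  obtains \<phi> where "nearest Phi (Xt i) \<phi>" "\<phi> \<in> Phi" "norm (\<phi> - Xt i) \<le> r + \<epsilon>"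
proof -
  obtain j where j: "j < k" "W i = w j" using signal[OF assms] by blast
  obtain \<phi> where \<phi>: "\<phi> \<in> Phi" "\<phi> \<in> cball (W i) r" using ball_hit[OF j(1)] j(2) by auto
  have "norm (\<phi> - Xt i) \<le> r + \<epsilon>"
  proof (rule norm_diff_triangle_le)
    show "norm (\<phi> - W i) \<le> r" using \<phi>(2) by (simp add: dist_norm norm_minus_commute)
    show "norm (W i - Xt i) \<le> \<epsilon>" using signal_close[OF assms] by (simp add: norm_minus_commute)
  qed
  moreover have "nearest Phi (Xt i) \<phi>" using \<phi> nearest_iff[OF assms] by simp
  ultimately show ?thesis using that \<phi>(1) by simp
qed

lemma signal_inliers: "{..<n} \<subseteq> P1"
proof
  fix i assume "i \<in> {..<n}"
  then obtain \<phi> where "\<phi> \<in> Phi" "norm (\<phi> - Xt i) \<le> r + \<epsilon>" using nearest_close by blast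
  have "i \<notin> P2"
  proof
    assume "i \<in> P2"
    then have "lam \<le> norm (\<phi> - Xt i)" using rkm_minimizer_outlier_far[OF minimizer _ \<open>\<phi> \<in> Phi\<close>] by blast
    then show False using \<open>norm (\<phi> - Xt i) \<le> r + \<epsilon>\<close> r_le eps_le r_pos by linarith
  qed
  then show "i \<in> P1" using adm \<open>i \<in> {..<n}\<close> n_le_N by (auto simp: rkm_adm_def)
qed

lemma same_nearest_iff:
  assumes "i < n" "i' < n"
  shows "(\<exists>\<phi>. nearest Phi (Xt i) \<phi> \<and> nearest Phi (Xt i') \<phi>) \<longleftrightarrow> W i = W i'"
proof
  assume "\<exists>\<phi>. nearest Phi (Xt i) \<phi> \<and> nearest Phi (Xt i') \<phi>"
  then obtain x where x: "x \<in> cball (W i) r" "x \<in> cball (W i') r" using nearest_iff assms by blast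
  obtain j j' where "j < k" "W i = w j" "j' < k" "W i' = w j'"
    using signal[OF assms(1)] signal[OF assms(2)] by blast
  have "j = j'"
  proof (rule ccontr)
    assume "j \<noteq> j'"
    then have "cball (w j) r \<inter> cball (w j') r = {}"
      using balls_disjoint \<open>j < k\<close> \<open>j' < k\<close> by (simp add: disjoint_family_on_def)
    then show False using x \<open>W i = w j\<close> \<open>W i' = w j'\<close> by auto
  qed
  then show "W i = W i'" using \<open>W i = w j\<close> \<open>W i' = w j'\<close> by simp
next
  assume "W i = W i'"
  obtain \<phi> where "nearest Phi (Xt i) \<phi>" using nearest_close[OF assms(1)] by blast
  moreover from this have "nearest Phi (Xt i') \<phi>"
    using \<open>W i = W i'\<close> by (simp add: nearest_iff[OF assms(1)] nearest_iff[OF assms(2)])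
  ultimately show "\<exists>\<phi>. nearest Phi (Xt i) \<phi> \<and> nearest Phi (Xt i') \<phi>" by blast
qed

end

definition rkm_recovers_blocks ::
    "nat \<Rightarrow> real \<Rightarrow> real \<Rightarrow> real \<Rightarrow> (nat \<Rightarrow> 'a::real_normed_vector) \<Rightarrow> (nat \<Rightarrow> 'a) \<Rightarrow> nat
      \<Rightarrow> (nat \<Rightarrow> 'a) \<Rightarrow> 'a set \<Rightarrow> nat set \<Rightarrow> bool" where
  "rkm_recovers_blocks k lam eta s z y n Xt Phi P1 \<longleftrightarrow>
     (let r = min (lam / 3) (eta / 6) in
          (\<forall>j<k. card (Phi \<inter> cball (s *\<^sub>R z j) r) = 1)
        \<and> {..<n} \<subseteq> P1
        \<and> (\<forall>i<n. \<forall>\<phi>. nearest Phi (Xt i) \<phi> \<longleftrightarrow> \<phi> \<in> Phi \<inter> cball (s *\<^sub>R y i) r)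
        \<and> (\<forall>i<n. \<forall>i'<n. (\<exists>\<phi>. nearest Phi (Xt i) \<phi> \<and> nearest Phi (Xt i') \<phi>) \<longleftrightarrow> y i = y i'))"

lemma rkm_minimizer_recovers_blocks:
  fixes z y \<zeta> Xt :: "nat \<Rightarrow> 'a::real_normed_vector" and s b :: real
  assumes z_inj: "inj_on z {..<k}" and "0 < s"
    and sep: "\<And>j l. j < k \<Longrightarrow> l < k \<Longrightarrow> j \<noteq> l \<Longrightarrow> eta < norm (s *\<^sub>R z j - s *\<^sub>R z l)"
    and "0 < lam" "0 < eta" "0 < n"
    and y_atoms: "\<And>i. i < n \<Longrightarrow> y i \<in> z ` {..<k}"
    and block_size: "\<And>j. j < k \<Longrightarrow> b \<le> card {i. i < n \<and> y i = z j}"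
    and Xt_close: "\<And>i. i < n + m \<Longrightarrow> norm (Xt i - s *\<^sub>R stack n y \<zeta> i) \<le> \<epsilon>"
    and z_bounded: "\<And>j. j < k \<Longrightarrow> norm (s *\<^sub>R z j) \<le> B"
    and \<zeta>_bounded: "\<And>i. i < m \<Longrightarrow> norm (s *\<^sub>R \<zeta> i) \<le> B"
    and "\<epsilon> \<le> min (lam / 3) (eta / 6) / 4"
    and "real (n + m) * \<epsilon> + 2 * B * real m < b * min (lam / 3) (eta / 6) / 2"
    and "rkm_minimizer k lam (n + m) Xt Phi P1 P2"
  shows "rkm_recovers_blocks k lam eta s z y n Xt Phi P1"
proof -
  have stack_signal: "stack n y \<zeta> i = y i" if "i < n" for i
    using that by (simp add: stack_def)
  interpret rkm_recovery k n "n + m" lam eta \<epsilon> B b "\<lambda>j. s *\<^sub>R z j" "\<lambda>i. s *\<^sub>R stack n y \<zeta> i" Xt Phi P1 P2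
  proof
    show "inj_on (\<lambda>j. s *\<^sub>R z j) {..<k}" using z_inj \<open>0 < s\<close> by (auto simp: inj_on_def)
    show "\<exists>j<k. s *\<^sub>R stack n y \<zeta> i = s *\<^sub>R z j" if "i < n" for i
      using y_atoms[OF that] stack_signal[OF that] by auto
    show "b \<le> card {i. i < n \<and> s *\<^sub>R stack n y \<zeta> i = s *\<^sub>R z j}" if "j < k" for j
      using block_size[OF that] stack_signal \<open>0 < s\<close> by (auto cong: conj_cong)
    show "norm (s *\<^sub>R stack n y \<zeta> i) \<le> B" if "n \<le> i" "i < n + m" for i
      using \<zeta>_bounded[of "i - n"] that by (simp add: stack_def)
  qed (use assms in auto)
  show ?thesis
    unfolding rkm_recovers_blocks_def Let_def r_def[symmetric]
    using card_ball_eq_1 signal_inliers nearest_iff same_nearest_iff \<open>0 < s\<close> by (simp add: stack_signal)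
qed

section \<open>Asymptotics\<close>

lemma tendsto_ln_powr_over_sqrt:
  assumes "filterlim N at_top F"
  shows "((\<lambda>n. C * ln (N n) powr c / sqrt (N n)) \<longlongrightarrow> 0) F"
proof -
  have "((\<lambda>x::real. C * ln x powr c / sqrt x) \<longlongrightarrow> 0) at_top" by real_asymp
  from filterlim_compose[OF this assms] show ?thesis by simp
qed

lemma eventually_noise_cost_small:
  fixes m :: "nat \<Rightarrow> nat" and e :: "nat \<Rightarrow> real"
  assumes "(\<lambda>n. real (m n) / real n) \<longlonglongrightarrow> 0" and "e \<longlonglongrightarrow> 0" and "0 < a"
  shows "eventually (\<lambda>n. real (n + m n) * e n + 2 * R * real (m n) < a * real n) sequentially"
proof -
  have "(\<lambda>n. (1 + real (m n) / real n) * e n + 2 * R * (real (m n) / real n)) \<longlonglongrightarrow> (1 + 0) * 0 + 2 * R * 0"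
    by (intro tendsto_intros assms)
  then have "eventually (\<lambda>n. (1 + real (m n) / real n) * e n + 2 * R * (real (m n) / real n) < a) sequentially"
    using \<open>0 < a\<close> by (intro order_tendstoD) auto
  then show ?thesis using eventually_gt_at_top[of "0::nat"]
    by eventually_elim (simp add: field_simps)
qed

lemma eventually_rkm_recovers_blocks:
  fixes z :: "nat \<Rightarrow> 'a::real_normed_vector" and y \<zeta> Xt :: "nat \<Rightarrow> 'w \<Rightarrow> nat \<Rightarrow> 'a"
    and m :: "nat \<Rightarrow> nat" and eps lam :: "nat \<Rightarrow> real"
  assumes z_inj: "inj_on z {..<k}" and s: "0 < s" "s \<le> 1"
    and sep: "\<And>j l. j < k \<Longrightarrow> l < k \<Longrightarrow> j \<noteq> l \<Longrightarrow> eta < norm (s *\<^sub>R z j - s *\<^sub>R z l)"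
    and "0 < eta" and lam: "0 < lam0" "\<And>n. lam0 \<le> lam n"
    and "0 < k" and pr_pos: "\<And>j. j < k \<Longrightarrow> 0 < pr j"
    and z_bounded: "\<And>j. j < k \<Longrightarrow> norm (z j) \<le> R"
    and m_small: "(\<lambda>n. real (m n) / real n) \<longlonglongrightarrow> 0" and eps_lim: "eps \<longlonglongrightarrow> 0"
    and y_atoms: "\<And>n \<omega> i. \<omega> \<in> G n \<Longrightarrow> i < n \<Longrightarrow> y n \<omega> i \<in> z ` {..<k}"
    and count: "\<And>n \<omega> j. \<omega> \<in> G n \<Longrightarrow> j < k \<Longrightarrow> n * pr j / 2 \<le> card {i. i < n \<and> y n \<omega> i = z j}"
    and close: "\<And>n \<omega> i. \<omega> \<in> G n \<Longrightarrow> i < n + m n \<Longrightarrow>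
                  norm (Xt n \<omega> i - s *\<^sub>R stack n (y n \<omega>) (\<zeta> n \<omega>) i) \<le> eps n"
    and \<zeta>_bounded: "\<And>n \<omega> i. \<omega> \<in> G n \<Longrightarrow> i < m n \<Longrightarrow> norm (\<zeta> n \<omega> i) \<le> R"
  shows "eventually (\<lambda>n. \<forall>\<omega>\<in>G n. \<forall>Phi P1 P2. rkm_minimizer k (lam n) (n + m n) (Xt n \<omega>) Phi P1 P2 \<longrightarrow>
           rkm_recovers_blocks k (lam n) eta s z (y n \<omega>) n (Xt n \<omega>) Phi P1) sequentially"
proof -
  define pmin where "pmin = Min (pr ` {..<k})"
  have pmin: "0 < pmin" "\<And>j. j < k \<Longrightarrow> pmin \<le> pr j"
    using pr_pos \<open>0 < k\<close> by (auto simp: pmin_def Min_gr_iff lessThan_empty_iff)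
  define r0 where "r0 = min (lam0 / 3) (eta / 6)"
  have "0 < r0" using \<open>0 < eta\<close> lam(1) by (simp add: r0_def)
  then have "eventually (\<lambda>n. eps n < r0 / 4) sequentially"
    by (intro order_tendstoD(2)[OF eps_lim]) simp
  moreover have "eventually (\<lambda>n. real (n + m n) * eps n + 2 * R * real (m n) < pmin * r0 / 4 * n)
      sequentially"
    using \<open>0 < r0\<close> pmin(1) by (intro eventually_noise_cost_small[OF m_small eps_lim]) simp
  ultimately show ?thesis using eventually_gt_at_top[of 0]
  proof eventually_elim
    case (elim n)
    have r0_le: "r0 \<le> min (lam n / 3) (eta / 6)" using lam(2)[of n] by (auto simp: r0_def)
    have cost: "real (n + m n) * eps n + 2 * R * real (m n) < n * pmin / 2 * min (lam n / 3) (eta / 6) / 2"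
    proof -
      have "pmin * r0 / 4 * n \<le> n * pmin / 2 * min (lam n / 3) (eta / 6) / 2"
        using mult_left_mono[OF r0_le, of "pmin * n / 4"] pmin(1) by (simp add: algebra_simps)
      then show ?thesis using elim by linarith
    qed
    have scaled: "norm (s *\<^sub>R x) \<le> R" if "norm x \<le> R" for x :: 'a
      using s mult_left_le_one_le[of "norm x" s] that by simp
    show ?case
    proof (intro ballI allI impI)
      fix \<omega> Phi P1 P2
      assume "\<omega> \<in> G n" and mini: "rkm_minimizer k (lam n) (n + m n) (Xt n \<omega>) Phi P1 P2"
      show "rkm_recovers_blocks k (lam n) eta s z (y n \<omega>) n (Xt n \<omega>) Phi P1"
      proof (rule rkm_minimizer_recovers_blocks[OF z_inj s(1) sep _ \<open>0 < eta\<close> _ _ _ _ _ _ _ cost mini])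
        show "n * pmin / 2 \<le> card {i. i < n \<and> y n \<omega> i = z j}" if "j < k" for j
          using count[OF \<open>\<omega> \<in> G n\<close> that] mult_left_mono[OF pmin(2)[OF that] of_nat_0_le_iff[of n]]
          by linarith
        show "norm (s *\<^sub>R \<zeta> n \<omega> i) \<le> R" if "i < m n" for i
          by (rule scaled[OF \<zeta>_bounded[OF \<open>\<omega> \<in> G n\<close> that]])
      qed (use elim r0_le lam \<open>\<omega> \<in> G n\<close> scaled z_bounded y_atoms close in \<open>auto intro: less_le_trans\<close>)
    qed
  qed
qed

section \<open>Probabilistic estimates\<close>

lemma (in prob_space) pairwise_indep_indicators_variance:
  fixes A :: "nat \<Rightarrow> 'a set"
  assumes A_sets: "\<And>i. i < n \<Longrightarrow> A i \<in> events" and A_prob: "\<And>i. i < n \<Longrightarrow> prob (A i) = p"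
    and pairwise: "\<And>i l. i < n \<Longrightarrow> l < n \<Longrightarrow> i \<noteq> l \<Longrightarrow> prob (A i \<inter> A l) = p * p"
  shows "expectation (\<lambda>x. \<Sum>i<n. indicator (A i) x) = n * p"
    and "integrable M (\<lambda>x. (\<Sum>i<n. indicator (A i) x :: real)\<^sup>2)"
    and "variance (\<lambda>x. \<Sum>i<n. indicator (A i) x) = n * (p - p * p)"
proof -
  define S where "S x = (\<Sum>i<n. indicator (A i) x :: real)" for x
  define cross where "cross i l x = indicator (A i \<inter> A l) x - p * indicator (A i) x
      - p * indicator (A l) x + p * p" for i l and x :: 'a
  have int_A: "integrable M (indicator (A i) :: 'a \<Rightarrow> real)" if "i < n" for i
    using A_sets[OF that] by (simp add: integrable_indicator_iff emeasure_eq_measure)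
  have int_cross: "integrable M (cross i l)" if "i < n" "l < n" for i l
    using int_A[OF that(1)] int_A[OF that(2)] A_sets[OF that(1)] A_sets[OF that(2)]
    by (auto simp: cross_def[abs_def] integrable_indicator_iff emeasure_eq_measure)
  have E_cross: "expectation (cross i l) = (if i = l then p - p * p else 0)" if "i < n" "l < n" for i l
    using int_A[OF that(1)] int_A[OF that(2)] A_sets[OF that(1)] A_sets[OF that(2)]
      A_prob[OF that(1)] A_prob[OF that(2)] pairwise[OF that] int_cross[OF that]
    by (auto simp: cross_def[abs_def] integrable_indicator_iff emeasure_eq_measure prob_space)
  show ES: "expectation S = n * p"
    unfolding S_def using int_A A_prob A_sets by (subst Bochner_Integration.integral_sum) auto
  have centered_sq: "(S x - n * p)\<^sup>2 = (\<Sum>i<n. \<Sum>l<n. cross i l x)" for x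
  proof -
    have "S x - n * p = (\<Sum>i<n. indicator (A i) x - p)"
      unfolding S_def by (simp add: sum_subtractf)
    then have "(S x - n * p)\<^sup>2 = (\<Sum>i<n. \<Sum>l<n. (indicator (A i) x - p) * (indicator (A l) x - p))"
      by (simp add: power2_eq_square sum_product)
    then show ?thesis
      by (simp add: cross_def indicator_inter_arith algebra_simps)
  qed
  have int_centered: "integrable M (\<lambda>x. (S x - n * p)\<^sup>2)"
    unfolding centered_sq using int_cross by (auto intro!: Bochner_Integration.integrable_sum)
  have "integrable M (\<lambda>x. (S x - n * p)\<^sup>2 + 2 * (n * p) * S x - (n * p)\<^sup>2)"
    using int_centered int_A unfolding S_def
    by (intro Bochner_Integration.integrable_diff Bochner_Integration.integrable_add) auto
  then show "integrable M (\<lambda>x. (S x)\<^sup>2)" by (simp add: power2_eq_square algebra_simps)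
  have "expectation (\<lambda>x. (S x - n * p)\<^sup>2) = (\<Sum>i<n. \<Sum>l<n. if i = l then p - p * p else 0)"
    unfolding centered_sq using int_cross E_cross
    by (subst Bochner_Integration.integral_sum) (auto intro!: Bochner_Integration.integrable_sum)
  then show "variance S = n * (p - p * p)" using ES by simp
qed

text \<open>The second-moment method: by Chebyshev, a count of pairwise independent events of
  probability \<open>p\<close> falls below half its mean \<open>n p\<close> with probability at most
  \<open>n p (1 - p) / (n p / 2)\<^sup>2 \<le> 4 / (n p)\<close>.\<close>
lemma (in prob_space) prob_sum_indicator_lt_half_mean:
  fixes A :: "nat \<Rightarrow> 'a set"
  assumes A_sets: "\<And>i. i < n \<Longrightarrow> A i \<in> events" and A_prob: "\<And>i. i < n \<Longrightarrow> prob (A i) = p"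
    and pairwise: "\<And>i l. i < n \<Longrightarrow> l < n \<Longrightarrow> i \<noteq> l \<Longrightarrow> prob (A i \<inter> A l) = p * p"
    and "0 < p" "0 < n"
  shows "prob {x\<in>space M. (\<Sum>i<n. indicator (A i) x) < n * p / 2} \<le> 4 / (n * p)"
proof -
  define S where "S x = (\<Sum>i<n. indicator (A i) x :: real)" for x
  note moments = pairwise_indep_indicators_variance[where A = A and n = n and p = p,
      OF A_sets A_prob pairwise, folded S_def]
  have [measurable]: "S \<in> borel_measurable M"
    unfolding S_def using A_sets by (intro borel_measurable_sum) (auto intro: borel_measurable_indicator)
  have "{x\<in>space M. S x < n * p / 2} \<subseteq> {x\<in>space M. n * p / 2 \<le> \<bar>S x - expectation S\<bar>}"
    using moments(1) \<open>0 < p\<close> \<open>0 < n\<close> by (auto simp: abs_if algebra_simps)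
  then have "prob {x\<in>space M. S x < n * p / 2} \<le> prob {x\<in>space M. n * p / 2 \<le> \<bar>S x - expectation S\<bar>}"
    by (intro finite_measure_mono) auto
  also have "\<dots> \<le> variance S / (n * p / 2)\<^sup>2"
    using \<open>0 < p\<close> \<open>0 < n\<close> by (intro Chebyshev_inequality moments(2)) auto
  also have "\<dots> = n * (p - p * p) / (n * p / 2)\<^sup>2" using moments(3) by simp
  also have "\<dots> \<le> n * p / (n * p / 2)\<^sup>2"
    using \<open>0 < p\<close> by (intro divide_right_mono mult_left_mono) auto
  also have "\<dots> = 4 / (n * p)" using \<open>0 < p\<close> \<open>0 < n\<close> by (simp add: power2_eq_square field_simps)
  finally show ?thesis unfolding S_def .
qed

lemma (in prob_space) count_eq_sum_indicator:
  fixes X :: "nat \<Rightarrow> 'a \<Rightarrow> 'b"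
  assumes "\<omega> \<in> space M"
  shows "real (card {i. i < n \<and> X i \<omega> = a}) = (\<Sum>i<n. indicator (X i -` {a} \<inter> space M) \<omega>)"
proof -
  have "(\<Sum>i<n. indicator (X i -` {a} \<inter> space M) \<omega>) = (\<Sum>i<n. of_bool (X i \<omega> = a) :: real)"
    using assms by (intro sum.cong) (auto simp: indicator_def)
  also have "\<dots> = real (card ({..<n} \<inter> {i. X i \<omega> = a}))" by simp
  finally show ?thesis by (simp add: Int_def conj_commute)
qed

lemma (in prob_space) borel_measurable_count_eq:
  fixes X :: "nat \<Rightarrow> 'a \<Rightarrow> 'b::t1_space"
  assumes "\<And>i. i < n \<Longrightarrow> X i \<in> borel_measurable M"
  shows "(\<lambda>\<omega>. real (card {i. i < n \<and> X i \<omega> = a})) \<in> borel_measurable M"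
proof (subst measurable_cong[OF count_eq_sum_indicator])
  show "(\<lambda>\<omega>. \<Sum>i<n. indicator (X i -` {a} \<inter> space M) \<omega> :: real) \<in> borel_measurable M"
    using assms by (intro borel_measurable_sum borel_measurable_indicator measurable_sets) auto
qed

lemma (in prob_space) indep_vars_count_lt_half_mean:
  fixes X :: "nat \<Rightarrow> 'a \<Rightarrow> 'b::t1_space"
  assumes indep: "indep_vars (\<lambda>_. borel) X I" and "{..<n} \<subseteq> I"
    and law: "\<And>i. i < n \<Longrightarrow> prob {\<omega>\<in>space M. X i \<omega> = a} = p" and "0 < p"
  shows "prob {\<omega>\<in>space M. real (card {i. i < n \<and> X i \<omega> = a}) < n * p / 2} \<le> 4 / (n * p)"
proof (cases "n = 0")
  case False
  define A where "A i = X i -` {a} \<inter> space M" for i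
  have meas: "X i \<in> borel_measurable M" if "i < n" for i
    using indep \<open>{..<n} \<subseteq> I\<close> that by (auto simp: indep_vars_def)
  have A_prob: "prob (A i) = p" if "i < n" for i
    using law[OF that] by (simp add: A_def vimage_def Int_def conj_commute)
  have "prob {\<omega>\<in>space M. (\<Sum>i<n. indicator (A i) \<omega>) < n * p / 2} \<le> 4 / (n * p)"
  proof (rule prob_sum_indicator_lt_half_mean)
    show "A i \<in> events" if "i < n" for i using meas[OF that] by (simp add: A_def measurable_sets)
    show "prob (A i \<inter> A l) = p * p" if "i < n" "l < n" "i \<noteq> l" for i l
      using indep_varsD[OF indep, of "{i, l}" "\<lambda>_. {a}"] that \<open>{..<n} \<subseteq> I\<close> A_prob
      by (auto simp: A_def)
  qed (use A_prob \<open>0 < p\<close> False in auto)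
  moreover have "{\<omega>\<in>space M. real (card {i. i < n \<and> X i \<omega> = a}) < n * p / 2}
      = {\<omega>\<in>space M. (\<Sum>i<n. indicator (A i) \<omega>) < n * p / 2}"
    by (rule Collect_cong) (auto simp: A_def count_eq_sum_indicator)
  ultimately show ?thesis by simp
qed simp

lemma (in prob_space) AE_mem_atoms:
  fixes Y :: "'a \<Rightarrow> 'b::t1_space" and z :: "nat \<Rightarrow> 'b"
  assumes "Y \<in> borel_measurable M" and "inj_on z {..<k}"
    and law: "\<And>j. j < k \<Longrightarrow> prob {\<omega>\<in>space M. Y \<omega> = z j} = pr j" and "(\<Sum>j<k. pr j) = 1"
  shows "AE \<omega> in M. Y \<omega> \<in> z ` {..<k}"
proof -
  have atom_sets: "{\<omega>\<in>space M. Y \<omega> = z j} \<in> events" for j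
    using measurable_sets[OF assms(1), of "{z j}"] by (simp add: vimage_def Int_def conj_commute)
  have eq: "{\<omega>\<in>space M. Y \<omega> \<in> z ` {..<k}} = (\<Union>j<k. {\<omega>\<in>space M. Y \<omega> = z j})" by auto
  have "prob {\<omega>\<in>space M. Y \<omega> \<in> z ` {..<k}} = (\<Sum>j<k. prob {\<omega>\<in>space M. Y \<omega> = z j})"
    unfolding eq using atom_sets \<open>inj_on z {..<k}\<close>
    by (intro finite_measure_finite_Union) (auto simp: disjoint_family_on_def inj_on_def)
  then have "prob {\<omega>\<in>space M. Y \<omega> \<in> z ` {..<k}} = 1" using law assms(4) by simp
  then show ?thesis using prob_eq_1[of "{\<omega>\<in>space M. Y \<omega> \<in> z ` {..<k}}"] eq atom_sets
    by (auto elim: AE_mp)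
qed

lemma AE_mem_of_distr_eq_uniform_measure:
  fixes Z :: "'a \<Rightarrow> 'b::euclidean_space"
  assumes "Z \<in> borel_measurable M" "distr M borel Z = uniform_measure lborel Om" "Om \<in> sets lborel"
  shows "AE \<omega> in M. Z \<omega> \<in> Om"
proof (rule AE_distrD[OF assms(1)])
  show "AE x in distr M borel Z. x \<in> Om"
    unfolding assms(2) using assms(3) by (intro AE_uniform_measureI) auto
qed

lemma (in prob_space) sample_support_event:
  fixes Y Z :: "'a \<Rightarrow> nat \<Rightarrow> 'b::euclidean_space" and z :: "nat \<Rightarrow> 'b"
  assumes Y_meas: "\<And>i. i < n \<Longrightarrow> (\<lambda>\<omega>. Y \<omega> i) \<in> borel_measurable M"
    and Y_law: "\<And>i j. i < n \<Longrightarrow> j < k \<Longrightarrow> prob {\<omega>\<in>space M. Y \<omega> i = z j} = pr j"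
    and pr_sum: "(\<Sum>j<k. pr j) = 1" and z_inj: "inj_on z {..<k}"
    and Z_meas: "\<And>i. i < m \<Longrightarrow> (\<lambda>\<omega>. Z \<omega> i) \<in> borel_measurable M"
    and Z_law: "\<And>i. i < m \<Longrightarrow> distr M borel (\<lambda>\<omega>. Z \<omega> i) = uniform_measure lborel Om"
    and Om: "Om \<in> sets lborel"
  shows "{\<omega>\<in>space M. (\<forall>i<n. Y \<omega> i \<in> z ` {..<k}) \<and> (\<forall>i<m. Z \<omega> i \<in> Om)} \<in> events"
    and "AE \<omega> in M. \<omega> \<in> {\<omega>\<in>space M. (\<forall>i<n. Y \<omega> i \<in> z ` {..<k}) \<and> (\<forall>i<m. Z \<omega> i \<in> Om)}"
proof -
  have "{\<omega>\<in>space M. Y \<omega> i \<in> z ` {..<k}} \<in> events" if "i < n" for i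
    using measurable_sets[OF Y_meas[OF that], of "z ` {..<k}"]
    by (simp add: vimage_def Int_def conj_commute borel_closed finite_imp_closed)
  moreover have "{\<omega>\<in>space M. Z \<omega> i \<in> Om} \<in> events" if "i < m" for i
    using measurable_sets[OF Z_meas[OF that], of Om] Om by (simp add: vimage_def Int_def conj_commute)
  ultimately show "{\<omega>\<in>space M. (\<forall>i<n. Y \<omega> i \<in> z ` {..<k}) \<and> (\<forall>i<m. Z \<omega> i \<in> Om)} \<in> events"
    by (intro sets.sets_Collect_conj sets.sets_Collect_finite_All) auto
  have "AE \<omega> in M. (\<forall>i\<in>{..<n}. Y \<omega> i \<in> z ` {..<k}) \<and> (\<forall>i\<in>{..<m}. Z \<omega> i \<in> Om)"
    using AE_mem_atoms[OF Y_meas _ Y_law pr_sum] AE_mem_of_distr_eq_uniform_measure[OF Z_meas Z_law Om]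
      z_inj by (intro AE_conjI AE_finite_allI) auto
  then show "AE \<omega> in M. \<omega> \<in> {\<omega>\<in>space M. (\<forall>i<n. Y \<omega> i \<in> z ` {..<k}) \<and> (\<forall>i<m. Z \<omega> i \<in> Om)}"
    using AE_space by eventually_elim auto
qed

lemma (in prob_space) typical_sample_event:
  fixes Y Z :: "'a \<Rightarrow> nat \<Rightarrow> 'b::euclidean_space" and z :: "nat \<Rightarrow> 'b"
  assumes Y_meas: "\<And>i. i < n \<Longrightarrow> (\<lambda>\<omega>. Y \<omega> i) \<in> borel_measurable M"
    and Y_law: "\<And>i j. i < n \<Longrightarrow> j < k \<Longrightarrow> prob {\<omega>\<in>space M. Y \<omega> i = z j} = pr j"
    and pr_pos: "\<And>j. j < k \<Longrightarrow> 0 < pr j" and pr_sum: "(\<Sum>j<k. pr j) = 1"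
    and z_inj: "inj_on z {..<k}"
    and Z_meas: "\<And>i. i < m \<Longrightarrow> (\<lambda>\<omega>. Z \<omega> i) \<in> borel_measurable M"
    and Z_law: "\<And>i. i < m \<Longrightarrow> distr M borel (\<lambda>\<omega>. Z \<omega> i) = uniform_measure lborel Om"
    and Om: "Om \<in> sets lborel"
    and indep: "indep_vars (\<lambda>_. borel) (\<lambda>i \<omega>. stack n (Y \<omega>) (Z \<omega>) i) {..<n + m}"
  shows "\<exists>T\<in>events. 1 - (\<Sum>j<k. 4 / (n * pr j)) \<le> prob T \<and>
           (\<forall>\<omega>\<in>T. (\<forall>i<n. Y \<omega> i \<in> z ` {..<k}) \<and> (\<forall>i<m. Z \<omega> i \<in> Om) \<and>
                  (\<forall>j<k. n * pr j / 2 \<le> card {i. i < n \<and> Y \<omega> i = z j}))"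
proof -
  define Bad where "Bad j = {\<omega>\<in>space M. real (card {i. i < n \<and> Y \<omega> i = z j}) < n * pr j / 2}" for j
  have "(\<lambda>\<omega>. real (card {i. i < n \<and> Y \<omega> i = z j})) \<in> borel_measurable M" for j
    using borel_measurable_count_eq[of n "\<lambda>i \<omega>. Y \<omega> i"] Y_meas by simp
  then have Bad_sets: "Bad j \<in> events" for j unfolding Bad_def by measurable
  have Bad_prob: "prob (Bad j) \<le> 4 / (n * pr j)" if "j < k" for j
  proof -
    have "Bad j = {\<omega>\<in>space M. real (card {i. i < n \<and> stack n (Y \<omega>) (Z \<omega>) i = z j}) < n * pr j / 2}"
      unfolding Bad_def stack_def by (auto intro!: arg_cong[where f = card] cong: conj_cong)
    also have "prob \<dots> \<le> 4 / (n * pr j)"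
      using Y_law that pr_pos by (intro indep_vars_count_lt_half_mean[OF indep]) (auto simp: stack_def)
    finally show ?thesis .
  qed
  define Good where "Good = {\<omega>\<in>space M. (\<forall>i<n. Y \<omega> i \<in> z ` {..<k}) \<and> (\<forall>i<m. Z \<omega> i \<in> Om)}"
  have Good_sets: "Good \<in> events"
    unfolding Good_def by (rule sample_support_event(1)[OF Y_meas Y_law pr_sum z_inj Z_meas Z_law Om])
  have AE_Good: "AE \<omega> in M. \<omega> \<in> Good"
    unfolding Good_def by (rule sample_support_event(2)[OF Y_meas Y_law pr_sum z_inj Z_meas Z_law Om])
  define T where "T = Good - (\<Union>j<k. Bad j)"
  have T_sets: "T \<in> events" unfolding T_def using Good_sets Bad_sets by auto
  have "AE \<omega> in M. \<omega> \<in> T \<longleftrightarrow> \<omega> \<in> space M - (\<Union>j<k. Bad j)"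
    using AE_Good by eventually_elim (auto simp: T_def Good_def)
  then have "prob T = prob (space M - (\<Union>j<k. Bad j))"
    using T_sets Bad_sets by (intro finite_measure_eq_AE) auto
  also have "\<dots> = 1 - prob (\<Union>j<k. Bad j)" using Bad_sets by (intro prob_compl) auto
  moreover have "prob (\<Union>j<k. Bad j) \<le> (\<Sum>j<k. prob (Bad j))"
    using Bad_sets by (intro finite_measure_subadditive_finite) auto
  moreover have "\<dots> \<le> (\<Sum>j<k. 4 / (n * pr j))" using Bad_prob by (intro sum_mono) auto
  ultimately have "1 - (\<Sum>j<k. 4 / (n * pr j)) \<le> prob T" by linarith
  moreover have "\<forall>\<omega>\<in>T. (\<forall>i<n. Y \<omega> i \<in> z ` {..<k}) \<and> (\<forall>i<m. Z \<omega> i \<in> Om) \<and>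
                  (\<forall>j<k. n * pr j / 2 \<le> card {i. i < n \<and> Y \<omega> i = z j})"
    by (auto simp: T_def Good_def Bad_def not_less)
  ultimately show ?thesis using T_sets by blast
qed

lemma typical_sample_events:
  fixes M :: "nat \<Rightarrow> 'w measure" and Y Z :: "nat \<Rightarrow> 'w \<Rightarrow> nat \<Rightarrow> 'b::euclidean_space"
    and z :: "nat \<Rightarrow> 'b" and m :: "nat \<Rightarrow> nat"
  assumes prob: "\<And>n. prob_space (M n)"
    and Y_meas: "\<And>n i. i < n \<Longrightarrow> (\<lambda>\<omega>. Y n \<omega> i) \<in> borel_measurable (M n)"
    and Y_law: "\<And>n i j. i < n \<Longrightarrow> j < k \<Longrightarrow> measure (M n) {\<omega>\<in>space (M n). Y n \<omega> i = z j} = pr j"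
    and pr_pos: "\<And>j. j < k \<Longrightarrow> 0 < pr j" and pr_sum: "(\<Sum>j<k. pr j) = 1"
    and z_inj: "inj_on z {..<k}"
    and Z_meas: "\<And>n i. i < m n \<Longrightarrow> (\<lambda>\<omega>. Z n \<omega> i) \<in> borel_measurable (M n)"
    and Z_law: "\<And>n i. i < m n \<Longrightarrow> distr (M n) borel (\<lambda>\<omega>. Z n \<omega> i) = uniform_measure lborel Om"
    and Om: "Om \<in> sets lborel"
    and indep: "\<And>n. prob_space.indep_vars (M n) (\<lambda>_. borel) (\<lambda>i \<omega>. stack n (Y n \<omega>) (Z n \<omega>) i) {..<n + m n}"
  obtains T where "\<And>n. T n \<in> sets (M n)" and "(\<lambda>n. measure (M n) (T n)) \<longlonglongrightarrow> 1"
    and "\<And>n \<omega> i. \<omega> \<in> T n \<Longrightarrow> i < n \<Longrightarrow> Y n \<omega> i \<in> z ` {..<k}"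
    and "\<And>n \<omega> i. \<omega> \<in> T n \<Longrightarrow> i < m n \<Longrightarrow> Z n \<omega> i \<in> Om"
    and "\<And>n \<omega> j. \<omega> \<in> T n \<Longrightarrow> j < k \<Longrightarrow> n * pr j / 2 \<le> card {i. i < n \<and> Y n \<omega> i = z j}"
proof -
  have "\<forall>n. \<exists>T. T \<in> sets (M n) \<and> 1 - (\<Sum>j<k. 4 / (n * pr j)) \<le> measure (M n) T \<and>
           (\<forall>\<omega>\<in>T. (\<forall>i<n. Y n \<omega> i \<in> z ` {..<k}) \<and> (\<forall>i<m n. Z n \<omega> i \<in> Om) \<and>
                  (\<forall>j<k. n * pr j / 2 \<le> card {i. i < n \<and> Y n \<omega> i = z j}))"
    using prob_space.typical_sample_event[OF prob Y_meas Y_law pr_pos pr_sum z_inj Z_meas Z_law Om indep]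
    by (simp add: Bex_def)
  from choice[OF this] obtain T where T: "\<forall>n. T n \<in> sets (M n) \<and> 1 - (\<Sum>j<k. 4 / (n * pr j)) \<le> measure (M n) (T n) \<and>
           (\<forall>\<omega>\<in>T n. (\<forall>i<n. Y n \<omega> i \<in> z ` {..<k}) \<and> (\<forall>i<m n. Z n \<omega> i \<in> Om) \<and>
                  (\<forall>j<k. n * pr j / 2 \<le> card {i. i < n \<and> Y n \<omega> i = z j}))" ..
  have "(\<lambda>n. 4 / pr j * inverse (real n)) \<longlonglongrightarrow> 0" for j
    by (intro tendsto_mult_right_zero lim_inverse_n)
  then have "(\<lambda>n. \<Sum>j<k. 4 / (n * pr j)) \<longlonglongrightarrow> 0"
    by (intro tendsto_null_sum) (simp add: field_simps)
  then have lower_lim: "(\<lambda>n. 1 - (\<Sum>j<k. 4 / (n * pr j))) \<longlonglongrightarrow> 1"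
    using tendsto_diff[OF tendsto_const, of _ 0 sequentially 1] by simp
  have "(\<lambda>n. measure (M n) (T n)) \<longlonglongrightarrow> 1"
    using T prob_space.prob_le_1[OF prob]
    by (intro tendsto_sandwich[OF _ _ lower_lim tendsto_const] always_eventually allI) auto
  with T show ?thesis by (intro that) auto
qed

lemma tendsto_measure_Int_eq_1:
  assumes prob: "\<And>n. prob_space (M n)" and sets: "\<And>n. A n \<in> sets (M n)" "\<And>n. B n \<in> sets (M n)"
    and lim: "(\<lambda>n. measure (M n) (A n)) \<longlonglongrightarrow> 1" "(\<lambda>n. measure (M n) (B n)) \<longlonglongrightarrow> 1"
  shows "(\<lambda>n. measure (M n) (A n \<inter> B n)) \<longlonglongrightarrow> 1"
proof (rule tendsto_sandwich[OF _ _ _ tendsto_const])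
  show "(\<lambda>n. measure (M n) (A n) + measure (M n) (B n) - 1) \<longlonglongrightarrow> 1"
    using tendsto_diff[OF tendsto_add[OF lim] tendsto_const, of 1] by simp
  have "measure (M n) (A n) + measure (M n) (B n) - 1 \<le> measure (M n) (A n \<inter> B n)" for n
  proof -
    interpret prob_space "M n" by (rule prob)
    have "measure (M n) (A n \<union> B n) = measure (M n) (A n) + measure (M n) (B n) - measure (M n) (A n \<inter> B n)"
      using sets by (intro measure_Un3) (auto simp: fmeasurable_eq_sets)
    then show ?thesis using prob_le_1[of "A n \<union> B n"] by linarith
  qed
  then show "\<forall>\<^sub>F n in sequentially. measure (M n) (A n) + measure (M n) (B n) - 1 \<le> measure (M n) (A n \<inter> B n)"
    by simp
  show "\<forall>\<^sub>F n in sequentially. measure (M n) (A n \<inter> B n) \<le> 1"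
    by (simp add: prob_space.prob_le_1[OF prob])
qed

lemma events_tendsto_1_of_eventually:
  assumes "\<And>n. G n \<in> sets (M n)" and "(\<lambda>n. measure (M n) (G n)) \<longlonglongrightarrow> 1"
    and "eventually (\<lambda>n. \<forall>\<omega>\<in>G n. Q n \<omega>) sequentially"
  shows "\<exists>F. (\<forall>n. F n \<in> sets (M n)) \<and> (\<lambda>n. measure (M n) (F n)) \<longlonglongrightarrow> 1 \<and> (\<forall>n. \<forall>\<omega>\<in>F n. Q n \<omega>)"
proof (intro exI conjI)
  let ?F = "\<lambda>n. if \<forall>\<omega>\<in>G n. Q n \<omega> then G n else {}"
  show "\<forall>n. ?F n \<in> sets (M n)" "\<forall>n. \<forall>\<omega>\<in>?F n. Q n \<omega>" using assms(1) by auto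
  show "(\<lambda>n. measure (M n) (?F n)) \<longlonglongrightarrow> 1"
    using assms(2) by (subst tendsto_cong[OF eventually_mono[OF assms(3)]]) auto
qed

section \<open>Geometry of the latent space\<close>

lemma Ipq_mult_vec_nth: "(Ipq p *v y) $ i = (if rank_idx i < p then y $ i else - (y $ i))"
  unfolding matrix_vector_mult_def Ipq_def by (simp add: if_distrib[of "\<lambda>x. x * _"] cong: if_cong)

lemma norm_Ipq_mult_vec: "norm (Ipq p *v y) = norm y"
  unfolding norm_vec_def by (intro arg_cong2[where f = L2_set] ext refl) (simp add: Ipq_mult_vec_nth)

text \<open>Moving from the centre of the ball in the direction of \<open>Ipq p y\<close> changes the form
  \<open>x \<bullet> Ipq p y \<in> [0, 1]\<close> by \<open>e/2 \<cdot> \<parallel>Ipq p y\<parallel>\<close>, and \<open>Ipq p\<close> is an isometry.\<close>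
lemma norm_le_of_Ipq_form_bounded:
  fixes Xd :: "(real^'d::{finite,linorder}) set"
  assumes Xd: "\<forall>x\<in>Xd. \<forall>y\<in>Xd. x \<bullet> (Ipq p *v y) \<in> {0..1}"
    and "ball a e \<subseteq> Xd" and "0 < e" and "y \<in> Xd"
  shows "norm y \<le> 2 / e"
proof (cases "Ipq p *v y = 0")
  case False
  define v where "v = Ipq p *v y"
  define h where "h = (e / 2 / norm v) *\<^sub>R v"
  have "a + h \<in> Xd" "a \<in> Xd"
    using \<open>ball a e \<subseteq> Xd\<close> \<open>0 < e\<close> False by (auto simp: h_def v_def dist_norm)
  then have "(a + h) \<bullet> v \<le> 1" "0 \<le> a \<bullet> v"
    using Xd \<open>y \<in> Xd\<close> unfolding v_def by auto
  then have "h \<bullet> v \<le> 1" by (simp add: inner_add_left)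
  moreover have "h \<bullet> v = e / 2 * norm v"
    using False by (simp add: h_def v_def power2_norm_eq_inner[symmetric] power2_eq_square)
  ultimately show ?thesis
    using \<open>0 < e\<close> by (simp add: v_def norm_Ipq_mult_vec field_simps)
qed (use \<open>0 < e\<close> norm_Ipq_mult_vec[of p y] in simp)

lemma ball_subset_of_convex_measure_pos:
  fixes Om :: "'a::euclidean_space set"
  assumes "convex Om" "Om \<in> sets lborel" "0 < emeasure lborel Om"
  obtains a e where "0 < e" "ball a e \<subseteq> Om"
proof -
  have "\<not> negligible Om"
  proof
    assume "negligible Om"
    then have "Om \<in> null_sets lborel"
      using assms(2) null_sets_completion_iff[of Om lborel] by (simp add: negligible_iff_null_sets)
    then show False using assms(3) by (simp add: null_sets_def)
  qed
  then obtain a where "a \<in> interior Om" using negligible_convex_interior[OF assms(1)] by auto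
  then show ?thesis using that by (meson mem_interior)
qed

lemma norm_bounded_of_Ipq_form_bounded:
  fixes Xd Om :: "(real^'d::{finite,linorder}) set"
  assumes "\<forall>x\<in>Xd. \<forall>y\<in>Xd. x \<bullet> (Ipq p *v y) \<in> {0..1}"
    and "Om \<subseteq> Xd" "convex Om" "Om \<in> sets lborel" "0 < emeasure lborel Om"
  obtains R where "\<And>x. x \<in> Xd \<Longrightarrow> norm x \<le> R"
proof -
  obtain a e where "0 < e" "ball a e \<subseteq> Om" using ball_subset_of_convex_measure_pos assms(3-5) by blast
  then show ?thesis using that norm_le_of_Ipq_form_bounded[OF assms(1)] assms(2) by (meson order_trans)
qed

theorem mainTheorem3:
  fixes p q k :: nat
    and Xd Om :: "(real^('d::{finite,linorder})) set"
    and z :: "nat \<Rightarrow> real^('d::{finite,linorder})" and pr :: "nat \<Rightarrow> real"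
    and nu eta lam0 :: real and lam :: "nat \<Rightarrow> real"
    and m :: "nat \<Rightarrow> nat" and M :: "nat \<Rightarrow> 'w measure"
    and Y Z :: "nat \<Rightarrow> 'w \<Rightarrow> nat \<Rightarrow> real^('d::{finite,linorder})"
    and A :: "nat \<Rightarrow> 'w \<Rightarrow> nat \<Rightarrow> nat \<Rightarrow> real"
    and Xh :: "nat \<Rightarrow> 'w \<Rightarrow> nat \<Rightarrow> real^('d::{finite,linorder})"
    and Q :: "nat \<Rightarrow> real^('d::{finite,linorder})^('d::{finite,linorder})"
  assumes pq: "p + q = CARD('d::{finite,linorder})"
    and Xd: "\<forall>x\<in>Xd. \<forall>y\<in>Xd. x \<bullet> (Ipq p *v y) \<in> {0..1}"
    and z_in: "\<forall>j<k. z j \<in> Xd" and z_distinct: "inj_on z {..<k}"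
    and pr_pos: "\<forall>j<k. 0 < pr j" and pr_sum: "(\<Sum>j<k. pr j) = 1"
    and Om: "Om \<subseteq> Xd" "convex Om" "Om \<in> sets lborel"
            "0 < emeasure lborel Om" "emeasure lborel Om < \<infinity>"
    and nu: "0 < nu" "nu \<le> 1"
    and prob: "\<forall>n. prob_space (M n)"
    and Y_meas: "\<forall>n. \<forall>i<n. (\<lambda>\<omega>. Y n \<omega> i) \<in> borel_measurable (M n)"
    and Y_law: "\<forall>n. \<forall>i<n. \<forall>j<k. measure (M n) {\<omega>\<in>space (M n). Y n \<omega> i = z j} = pr j"
    and Z_meas: "\<forall>n. \<forall>i<m n. (\<lambda>\<omega>. Z n \<omega> i) \<in> borel_measurable (M n)"
    and Z_law: "\<forall>n. \<forall>i<m n. distr (M n) borel (\<lambda>\<omega>. Z n \<omega> i) = uniform_measure lborel Om"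
    and X_indep: "\<forall>n. prob_space.indep_vars (M n) (\<lambda>_. borel)
                        (\<lambda>i \<omega>. stack n (Y n \<omega>) (Z n \<omega>) i) {..<n + m n}"
    and A_adj: "\<forall>n. \<forall>\<omega>\<in>space (M n). \<forall>u v.
                   A n \<omega> u v \<in> {0, 1} \<and> A n \<omega> u v = A n \<omega> v u \<and> A n \<omega> u u = 0"
    and A_meas: "\<forall>n u v. (\<lambda>\<omega>. A n \<omega> u v) \<in> borel_measurable (M n)"
    and A_law: "\<forall>n. edge_law (M n) (n + m n) nu p (\<lambda>\<omega>. stack n (Y n \<omega>) (Z n \<omega>)) (A n)"
    and ASE: "\<forall>n. \<forall>\<omega>\<in>space (M n). is_ASE (n + m n) (A n \<omega>) (Xh n \<omega>)"
    and D1: "0 < eta" "\<forall>j<k. \<forall>l<k. j \<noteq> l \<longrightarrow> eta < norm (sqrt nu *\<^sub>R z j - sqrt nu *\<^sub>R z l)"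
    and D2: "(\<lambda>n. real (m n) / real n) \<longlonglongrightarrow> 0"
    and D3: "0 < lam0" "\<forall>n. lam0 \<le> lam n"
    and D4_Q: "\<forall>n. indef_orth p (Q n)"
    and D4: "\<exists>c C. 0 < c \<and> 0 < C \<and> (\<exists>E. (\<forall>n. E n \<in> sets (M n))
               \<and> (\<lambda>n. measure (M n) (E n)) \<longlonglongrightarrow> 1
               \<and> (\<forall>n. \<forall>\<omega>\<in>E n. \<forall>i<n + m n.
                    norm (Q n *v Xh n \<omega> i - sqrt nu *\<^sub>R stack n (Y n \<omega>) (Z n \<omega>) i)
                    \<le> C * ln (real (n + m n)) powr c / sqrt (real (n + m n))))"
  shows "\<exists>F. (\<forall>n. F n \<in> sets (M n)) \<and> (\<lambda>n. measure (M n) (F n)) \<longlonglongrightarrow> 1 \<and>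
    (\<forall>n. \<forall>\<omega>\<in>F n. \<forall>Phi P1 P2.
       rkm_minimizer k (lam n) (n + m n) (\<lambda>i. Q n *v Xh n \<omega> i) Phi P1 P2 \<longrightarrow>
       (let r = min (lam n / 3) (eta / 6) in
          (\<forall>j<k. card (Phi \<inter> cball (sqrt nu *\<^sub>R z j) r) = 1)
        \<and> {..<n} \<subseteq> P1
        \<and> (\<forall>i<n. \<forall>\<phi>. nearest Phi (Q n *v Xh n \<omega> i) \<phi> \<longleftrightarrow>
                      \<phi> \<in> Phi \<inter> cball (sqrt nu *\<^sub>R Y n \<omega> i) r)
        \<and> (\<forall>i<n. \<forall>i'<n. (\<exists>\<phi>. nearest Phi (Q n *v Xh n \<omega> i) \<phi> \<and>
                                nearest Phi (Q n *v Xh n \<omega> i') \<phi>) \<longleftrightarrow> Y n \<omega> i = Y n \<omega> i')))"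
proof -
  obtain c C E where E_sets: "\<And>n. E n \<in> sets (M n)" and E_lim: "(\<lambda>n. measure (M n) (E n)) \<longlonglongrightarrow> 1"
    and E_close: "\<And>n \<omega> i. \<omega> \<in> E n \<Longrightarrow> i < n + m n \<Longrightarrow>
                    norm (Q n *v Xh n \<omega> i - sqrt nu *\<^sub>R stack n (Y n \<omega>) (Z n \<omega>) i)
                    \<le> C * ln (real (n + m n)) powr c / sqrt (real (n + m n))"
    using D4 by blast
  have eps_lim: "(\<lambda>n. C * ln (real (n + m n)) powr c / sqrt (real (n + m n))) \<longlonglongrightarrow> 0"
    by (intro tendsto_ln_powr_over_sqrt filterlim_at_top_mono[OF filterlim_real_sequentially]) auto
  obtain R where R: "\<And>x. x \<in> Xd \<Longrightarrow> norm x \<le> R"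
    using norm_bounded_of_Ipq_form_bounded[OF Xd Om(1-4)] by blast
  obtain T where T_sets: "\<And>n. T n \<in> sets (M n)" and T_lim: "(\<lambda>n. measure (M n) (T n)) \<longlonglongrightarrow> 1"
    and T_Y: "\<And>n \<omega> i. \<omega> \<in> T n \<Longrightarrow> i < n \<Longrightarrow> Y n \<omega> i \<in> z ` {..<k}"
    and T_Z: "\<And>n \<omega> i. \<omega> \<in> T n \<Longrightarrow> i < m n \<Longrightarrow> Z n \<omega> i \<in> Om"
    and T_count: "\<And>n \<omega> j. \<omega> \<in> T n \<Longrightarrow> j < k \<Longrightarrow> n * pr j / 2 \<le> card {i. i < n \<and> Y n \<omega> i = z j}"
    by (rule typical_sample_events[OF prob[rule_format] Y_meas[rule_format] Y_law[rule_format]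
          pr_pos[rule_format] pr_sum z_distinct Z_meas[rule_format] Z_law[rule_format] Om(3)
          X_indep[rule_format]]) (assumption | rule that)+
  have "0 < k" using pr_sum by (cases k) auto
  have "eventually (\<lambda>n. \<forall>\<omega>\<in>E n \<inter> T n. \<forall>Phi P1 P2.
      rkm_minimizer k (lam n) (n + m n) (\<lambda>i. Q n *v Xh n \<omega> i) Phi P1 P2 \<longrightarrow>
      rkm_recovers_blocks k (lam n) eta (sqrt nu) z (Y n \<omega>) n (\<lambda>i. Q n *v Xh n \<omega> i) Phi P1) sequentially"
  proof (rule eventually_rkm_recovers_blocks[OF z_distinct _ _ _ D1(1) D3(1) _ \<open>0 < k\<close> _ _ D2 eps_lim,
        where s = "sqrt nu" and R = R and lam = lam and pr = pr and \<zeta> = Z])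
    show "0 < sqrt nu" "sqrt nu \<le> 1" using nu by auto
    show "eta < norm (sqrt nu *\<^sub>R z j - sqrt nu *\<^sub>R z l)" if "j < k" "l < k" "j \<noteq> l" for j l
      using D1(2) that by blast
    show "lam0 \<le> lam n" for n using D3(2) by blast
    show "0 < pr j" if "j < k" for j using pr_pos that by blast
    show "norm (z j) \<le> R" if "j < k" for j using R z_in that by blast
    show "norm (Z n \<omega> i) \<le> R" if "\<omega> \<in> E n \<inter> T n" "i < m n" for n \<omega> i
      using R T_Z Om(1) that by blast
  qed (use T_Y T_count E_close in auto)
  moreover have "(\<lambda>n. measure (M n) (E n \<inter> T n)) \<longlonglongrightarrow> 1"
    using E_sets T_sets by (intro tendsto_measure_Int_eq_1[OF _ _ _ E_lim T_lim] prob[rule_format])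
  ultimately show ?thesis
    unfolding rkm_recovers_blocks_def using E_sets T_sets by (intro events_tendsto_1_of_eventually) auto
qed

end
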